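(* Let $R$ be a ring, let $(X_*,d)$ be a chain complex of left $R$-modules with decompositions $X_n=\bigoplus_{i\in I_n}X_{n,i}$, let $Q$ be its weighted quiver, and let $\mathcal M$ be a partial matching of $Q$. Suppose that for each vertex $(n,i)$ of $Q^{\mathcal M}$, every zigzag path in $Q^{\mathcal M}$ starting at $(n,i)$ has finite length; that is, there is no infinite zigzag path. Then $\mathcal M$ is a Morse matching.
   Context: Write $d_{n,ji}:X_{n,i}\to X_{n-1,j}$ ($i\in I_n$, $j\in I_{n-1}$) for the components of $d_n$. The weighted quiver $Q$ has vertices the pairs $(n,i)$ with $n\in\mathbb Z$, $i\in I_n$. For each pair with $d_{n,ji}\neq0$ it has one arrow $(n,i)\to(n-1,j)$, of weight $d_{n,ji}$. A partial matching is a set $\mathcal M$ of arrows of $Q$ such that - every vertex is incident to at most one arrow of $\mathcal M$, and - the weight of each arrow of $\mathcal M$ is an isomorphism of modules. The quiver $Q^{\mathcal M}$ is obtained from $Q$ as follows: - each arrow not in $\mathcal M$ is kept, with its weight, and called thick; - each arrow $(n,i)\to(n-1,j)$ in $\mathcal M$ is replaced by a dotted arrow $(n-1,j)\to(n,i)$ of weight $-d_{n,ji}^{-1}$. A zigzag path is a path in $Q^{\mathcal M}$ whose arrows alternate between dotted and thick. For a finite path $p$, $\varphi^{\mathcal M}_p$ denotes the composition of the weights of its arrows, in the order of the path. Let $\mathcal V_n=\{(n,i):i\in I_n\}$ and let $\mathcal D_n\subseteq\mathcal V_n$ be the set of targets of arrows of $\mathcal M$ in $Q$. For $(n,i)\in\mathcal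 D_n$ and $(n,j)\in\mathcal V_n$, let $\mathrm{Path}_1^{\mathcal M}((n,i),(n,j))$ be the set of zigzag paths from $(n,i)$ to $(n,j)$ beginning with a dotted arrow. A Morse matching is a partial matching satisfying the following local finiteness hypothesis. For every $(n,i)\in\mathcal D_n$ and every $x\in X_{n,i}$: - for every $(n,j)\in\mathcal V_n$ the sum $\sum_{p\in\mathrm{Path}_1^{\mathcal M}((n,i),(n,j))}\varphi^{\mathcal M}_p(x)$ exists (for instance, it is a finite sum); - only finitely many $(n,j)\in\mathcal V_n$ have this sum nonzero. *)

theory Defs
  imports Main
begin

text \<open>All modules X_{n,i} live as subsets of one ambient abelian group 'm,
  with a (left) scalar action smul of the ring 'r.\<close>

definition left_module_on :: "('r::ring_1 \<Rightarrow> 'm::ab_group_add \<Rightarrow> 'm) \<Rightarrow> 'm set \<Rightarrow> bool" where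
  "left_module_on smul M \<longleftrightarrow>
     0 \<in> M \<and> (\<forall>x\<in>M. \<forall>y\<in>M. x + y \<in> M) \<and> (\<forall>x\<in>M. - x \<in> M) \<and>
     (\<forall>r. \<forall>x\<in>M. smul r x \<in> M) \<and>
     (\<forall>r. \<forall>x\<in>M. \<forall>y\<in>M. smul r (x + y) = smul r x + smul r y) \<and>
     (\<forall>r s. \<forall>x\<in>M. smul (r + s) x = smul r x + smul s x) \<and>
     (\<forall>r s. \<forall>x\<in>M. smul (r * s) x = smul r (smul s x)) \<and>
     (\<forall>x\<in>M. smul 1 x = x)"

definition linear_on :: "('r::ring_1 \<Rightarrow> 'm::ab_group_add \<Rightarrow> 'm) \<Rightarrow> 'm set \<Rightarrow> 'm set \<Rightarrow> ('m \<Rightarrow> 'm) \<Rightarrow> bool" where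
  "linear_on smul A B f \<longleftrightarrow>
     f ` A \<subseteq> B \<and> (\<forall>x\<in>A. \<forall>y\<in>A. f (x + y) = f x + f y) \<and>
     (\<forall>r. \<forall>x\<in>A. f (smul r x) = smul r (f x))"

definition module_iso_on :: "('r::ring_1 \<Rightarrow> 'm::ab_group_add \<Rightarrow> 'm) \<Rightarrow> 'm set \<Rightarrow> 'm set \<Rightarrow> ('m \<Rightarrow> 'm) \<Rightarrow> bool" where
  "module_iso_on smul A B f \<longleftrightarrow> linear_on smul A B f \<and> bij_betw f A B"

text \<open>Index sets I n (the I_n), components X n i (the X_{n,i}, for i in I n) and
  components d n j i : X n i \<rightarrow> X (n-1) j of the differential d_n.
  The differential d_n : \<Oplus>_i X_{n,i} \<rightarrow> \<Oplus>_j X_{n-1,j} is well defined iff every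
  generator component has finitely many nonzero images; d\<circ>d = 0 is stated on components.\<close>

definition decomposed_chain_complex ::
  "('r::ring_1 \<Rightarrow> 'm::ab_group_add \<Rightarrow> 'm) \<Rightarrow> (int \<Rightarrow> 'i set) \<Rightarrow> (int \<Rightarrow> 'i \<Rightarrow> 'm set)
    \<Rightarrow> (int \<Rightarrow> 'i \<Rightarrow> 'i \<Rightarrow> 'm \<Rightarrow> 'm) \<Rightarrow> bool" where
  "decomposed_chain_complex smul I X d \<longleftrightarrow>
     (\<forall>n. \<forall>i\<in>I n. left_module_on smul (X n i)) \<and>
     (\<forall>n. \<forall>i\<in>I n. \<forall>j\<in>I (n - 1). linear_on smul (X n i) (X (n - 1) j) (d n j i)) \<and>
     (\<forall>n. \<forall>i\<in>I n. \<forall>x\<in>X n i. finite {j \<in> I (n - 1). d n j i x \<noteq> 0}) \<and>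
     (\<forall>n. \<forall>i\<in>I n. \<forall>x\<in>X n i. \<forall>k\<in>I (n - 2).
        (\<Sum>j\<in>{j \<in> I (n - 1). d n j i x \<noteq> 0}. d (n - 1) k j (d n j i x)) = 0)"

text \<open>An arrow of Q is encoded by the triple (n, i, j): the arrow (n,i) \<rightarrow> (n-1,j) of weight d n j i.
  It exists iff i \<in> I n, j \<in> I (n-1) and d n j i is not the zero map on X n i.\<close>

definition Q_arrow :: "(int \<Rightarrow> 'i set) \<Rightarrow> (int \<Rightarrow> 'i \<Rightarrow> 'm::zero set)
    \<Rightarrow> (int \<Rightarrow> 'i \<Rightarrow> 'i \<Rightarrow> 'm \<Rightarrow> 'm) \<Rightarrow> int \<times> 'i \<times> 'i \<Rightarrow> bool" where
  "Q_arrow I X d a \<longleftrightarrow> (case a of (n, i, j) \<Rightarrow>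
      i \<in> I n \<and> j \<in> I (n - 1) \<and> (\<exists>x\<in>X n i. d n j i x \<noteq> 0))"

fun arrow_src :: "int \<times> 'i \<times> 'i \<Rightarrow> int \<times> 'i" where
  "arrow_src (n, i, j) = (n, i)"

fun arrow_tgt :: "int \<times> 'i \<times> 'i \<Rightarrow> int \<times> 'i" where
  "arrow_tgt (n, i, j) = (n - 1, j)"

definition partial_matching ::
  "('r::ring_1 \<Rightarrow> 'm::ab_group_add \<Rightarrow> 'm) \<Rightarrow> (int \<Rightarrow> 'i set) \<Rightarrow> (int \<Rightarrow> 'i \<Rightarrow> 'm set)
    \<Rightarrow> (int \<Rightarrow> 'i \<Rightarrow> 'i \<Rightarrow> 'm \<Rightarrow> 'm) \<Rightarrow> (int \<times> 'i \<times> 'i) set \<Rightarrow> bool" where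
  "partial_matching smul I X d M \<longleftrightarrow>
     (\<forall>a\<in>M. Q_arrow I X d a) \<and>
     (\<forall>a\<in>M. \<forall>b\<in>M. {arrow_src a, arrow_tgt a} \<inter> {arrow_src b, arrow_tgt b} \<noteq> {} \<longrightarrow> a = b) \<and>
     (\<forall>(n, i, j)\<in>M. module_iso_on smul (X n i) (X (n - 1) j) (d n j i))"

text \<open>Arrows of Q^M: Thick n i j is the kept arrow (n,i) \<rightarrow> (n-1,j) (not in M);
  Dotted n i j is the reversed arrow (n-1,j) \<rightarrow> (n,i) for (n,i,j) \<in> M.\<close>

datatype 'i qm_arrow = Thick int 'i 'i | Dotted int 'i 'i

definition QM_arrow :: "(int \<Rightarrow> 'i set) \<Rightarrow> (int \<Rightarrow> 'i \<Rightarrow> 'm::zero set)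
    \<Rightarrow> (int \<Rightarrow> 'i \<Rightarrow> 'i \<Rightarrow> 'm \<Rightarrow> 'm) \<Rightarrow> (int \<times> 'i \<times> 'i) set \<Rightarrow> 'i qm_arrow \<Rightarrow> bool" where
  "QM_arrow I X d M e \<longleftrightarrow> (case e of
      Thick n i j \<Rightarrow> Q_arrow I X d (n, i, j) \<and> (n, i, j) \<notin> M
    | Dotted n i j \<Rightarrow> (n, i, j) \<in> M)"

fun qm_src :: "'i qm_arrow \<Rightarrow> int \<times> 'i" where
  "qm_src (Thick n i j) = (n, i)"
| "qm_src (Dotted n i j) = (n - 1, j)"

fun qm_tgt :: "'i qm_arrow \<Rightarrow> int \<times> 'i" where
  "qm_tgt (Thick n i j) = (n - 1, j)"
| "qm_tgt (Dotted n i j) = (n, i)"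

fun is_dotted :: "'i qm_arrow \<Rightarrow> bool" where
  "is_dotted (Thick n i j) = False"
| "is_dotted (Dotted n i j) = True"

fun qm_weight :: "(int \<Rightarrow> 'i \<Rightarrow> 'm::ab_group_add set) \<Rightarrow> (int \<Rightarrow> 'i \<Rightarrow> 'i \<Rightarrow> 'm \<Rightarrow> 'm)
    \<Rightarrow> 'i qm_arrow \<Rightarrow> 'm \<Rightarrow> 'm" where
  "qm_weight X d (Thick n i j) = d n j i"
| "qm_weight X d (Dotted n i j) = (\<lambda>y. - the_inv_into (X n i) (d n j i) y)"

fun path_weight :: "(int \<Rightarrow> 'i \<Rightarrow> 'm::ab_group_add set) \<Rightarrow> (int \<Rightarrow> 'i \<Rightarrow> 'i \<Rightarrow> 'm \<Rightarrow> 'm)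
    \<Rightarrow> 'i qm_arrow list \<Rightarrow> 'm \<Rightarrow> 'm" where
  "path_weight X d [] x = x"
| "path_weight X d (e # es) x = path_weight X d es (qm_weight X d e x)"

definition zigzag_path :: "(int \<Rightarrow> 'i set) \<Rightarrow> (int \<Rightarrow> 'i \<Rightarrow> 'm::zero set)
    \<Rightarrow> (int \<Rightarrow> 'i \<Rightarrow> 'i \<Rightarrow> 'm \<Rightarrow> 'm) \<Rightarrow> (int \<times> 'i \<times> 'i) set \<Rightarrow> 'i qm_arrow list \<Rightarrow> bool" where
  "zigzag_path I X d M p \<longleftrightarrow>
     (\<forall>e\<in>set p. QM_arrow I X d M e) \<and>
     (\<forall>k. Suc k < length p \<longrightarrow> qm_tgt (p ! k) = qm_src (p ! Suc k) \<and>
                                  is_dotted (p ! k) \<noteq> is_dotted (p ! Suc k))"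

definition infinite_zigzag_path :: "(int \<Rightarrow> 'i set) \<Rightarrow> (int \<Rightarrow> 'i \<Rightarrow> 'm::zero set)
    \<Rightarrow> (int \<Rightarrow> 'i \<Rightarrow> 'i \<Rightarrow> 'm \<Rightarrow> 'm) \<Rightarrow> (int \<times> 'i \<times> 'i) set \<Rightarrow> (nat \<Rightarrow> 'i qm_arrow) \<Rightarrow> bool" where
  "infinite_zigzag_path I X d M f \<longleftrightarrow>
     (\<forall>k. QM_arrow I X d M (f k) \<and> qm_tgt (f k) = qm_src (f (Suc k)) \<and>
          is_dotted (f k) \<noteq> is_dotted (f (Suc k)))"

definition Path1 :: "(int \<Rightarrow> 'i set) \<Rightarrow> (int \<Rightarrow> 'i \<Rightarrow> 'm::zero set)
    \<Rightarrow> (int \<Rightarrow> 'i \<Rightarrow> 'i \<Rightarrow> 'm \<Rightarrow> 'm) \<Rightarrow> (int \<times> 'i \<times> 'i) set \<Rightarrow> int \<times> 'i \<Rightarrow> int \<times> 'i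
    \<Rightarrow> 'i qm_arrow list set" where
  "Path1 I X d M u v = {p. zigzag_path I X d M p \<and> p \<noteq> [] \<and> is_dotted (hd p) \<and>
                          qm_src (hd p) = u \<and> qm_tgt (last p) = v}"

definition D_set :: "(int \<times> 'i \<times> 'i) set \<Rightarrow> int \<Rightarrow> 'i set" where
  "D_set M n = {i. \<exists>k. (n + 1, k, i) \<in> M}"

text \<open>Morse matching. In a module without topology the sum over Path_1 "exists" when only
  finitely many of its terms are nonzero; its value is then the finite sum of those terms.\<close>

definition path_sum :: "(int \<Rightarrow> 'i set) \<Rightarrow> (int \<Rightarrow> 'i \<Rightarrow> 'm::ab_group_add set)
    \<Rightarrow> (int \<Rightarrow> 'i \<Rightarrow> 'i \<Rightarrow> 'm \<Rightarrow> 'm) \<Rightarrow> (int \<times> 'i \<times> 'i) set \<Rightarrow> int \<times> 'i \<Rightarrow> int \<times> 'i \<Rightarrow> 'm \<Rightarrow> 'm" where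
  "path_sum I X d M u v x =
     (\<Sum>p\<in>{p \<in> Path1 I X d M u v. path_weight X d p x \<noteq> 0}. path_weight X d p x)"

definition morse_matching ::
  "('r::ring_1 \<Rightarrow> 'm::ab_group_add \<Rightarrow> 'm) \<Rightarrow> (int \<Rightarrow> 'i set) \<Rightarrow> (int \<Rightarrow> 'i \<Rightarrow> 'm set)
    \<Rightarrow> (int \<Rightarrow> 'i \<Rightarrow> 'i \<Rightarrow> 'm \<Rightarrow> 'm) \<Rightarrow> (int \<times> 'i \<times> 'i) set \<Rightarrow> bool" where
  "morse_matching smul I X d M \<longleftrightarrow>
     partial_matching smul I X d M \<and>
     (\<forall>n. \<forall>i\<in>D_set M n. \<forall>x\<in>X n i.
        (\<forall>j\<in>I n. finite {p \<in> Path1 I X d M (n, i) (n, j). path_weight X d p x \<noteq> 0}) \<and>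
        finite {j \<in> I n. path_sum I X d M (n, i) (n, j) x \<noteq> 0})"

end

theory Submission
  imports Defs
begin

text \<open>Only zigzag paths of nonzero weight matter. Record such a path, applied to x, as the
  sequence of pairs (arrow, partial path weight at its target); all these values are nonzero. A
  pair has only finitely many possible successors: a thick arrow out of (m,k) needs a nonzero
  component of d at the current value, and there is at most one dotted arrow out of (m,k), since M
  is a matching. As there is no infinite zigzag path, the successor relation is well founded, and
  a finitely branching well-founded relation has only finitely many descending chains from any
  point (Koenig's lemma). So only finitely many paths in Path_1 from (n,i) have nonzero weight at
  x, which gives both finiteness conditions of a Morse matching.\<close>

fun descending_chain :: "('a \<times> 'a) set \<Rightarrow> 'a \<Rightarrow> 'a list \<Rightarrow> bool" where
  "descending_chain R s [] \<longleftrightarrow> True"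
| "descending_chain R s (s' # ss) \<longleftrightarrow> (s', s) \<in> R \<and> descending_chain R s' ss"

lemma finite_descending_chains:
  assumes "wf R" and finitely_branching: "\<And>s. finite {s'. (s', s) \<in> R}"
  shows "finite {ss. descending_chain R s ss}"
  using assms(1)
proof (induction s rule: wf_induct_rule)
  case (less s)
  have "{ss. descending_chain R s ss}
      \<subseteq> insert [] (\<Union>s'\<in>{s'. (s', s) \<in> R}. Cons s' ` {ss. descending_chain R s' ss})"
  proof
    fix ss
    assume "ss \<in> {ss. descending_chain R s ss}"
    then show "ss \<in> insert [] (\<Union>s'\<in>{s'. (s', s) \<in> R}. Cons s' ` {ss. descending_chain R s' ss})"
      by (cases ss) auto
  qed
  moreover have "finite (insert [] (\<Union>s'\<in>{s'. (s', s) \<in> R}. Cons s' ` {ss. descending_chain R s' ss}))"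
    using less finitely_branching by blast
  ultimately show ?case
    by (rule finite_subset)
qed

lemma zigzag_path_Cons_Cons:
  "zigzag_path I X d M (e # e' # es) \<longleftrightarrow>
     QM_arrow I X d M e \<and> qm_tgt e = qm_src e' \<and> is_dotted e \<noteq> is_dotted e' \<and>
     zigzag_path I X d M (e' # es)"
  unfolding zigzag_path_def by (auto simp: All_less_Suc2 nth_Cons split: nat.splits)

lemma matched_arrow_unique:
  assumes "partial_matching smul I X d M" and "(n, k, i) \<in> M" and "(n, k', i) \<in> M"
  shows "k = k'"
  using assms unfolding partial_matching_def by fastforce

lemma linear_on_zero:
  assumes "left_module_on smul A" and "linear_on smul A B f"
  shows "f 0 = 0"
proof -
  have "f (0 + 0) = f 0 + f 0"
    using assms unfolding left_module_on_def linear_on_def by blast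
  then show ?thesis
    by simp
qed

lemma qm_weight_in_target:
  assumes cc: "decomposed_chain_complex smul I X d" and pm: "partial_matching smul I X d M"
    and e: "QM_arrow I X d M e" and y: "y \<in> case_prod X (qm_src e)"
  shows "qm_weight X d e y \<in> case_prod X (qm_tgt e)"
proof (cases e)
  case (Thick n i j)
  then have "i \<in> I n" and "j \<in> I (n - 1)"
    using e by (auto simp: QM_arrow_def Q_arrow_def)
  then have "linear_on smul (X n i) (X (n - 1) j) (d n j i)"
    using cc by (auto simp: decomposed_chain_complex_def)
  then show ?thesis
    using Thick y by (auto simp: linear_on_def)
next
  case (Dotted n i j)
  then have "(n, i, j) \<in> M"
    using e by (auto simp: QM_arrow_def)
  then have "i \<in> I n" and "bij_betw (d n j i) (X n i) (X (n - 1) j)"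
    using pm by (auto simp: partial_matching_def Q_arrow_def module_iso_on_def)
  then have "left_module_on smul (X n i)" and "the_inv_into (X n i) (d n j i) y \<in> X n i"
    using cc y Dotted bij_betwE[OF bij_betw_the_inv_into]
    by (auto simp: decomposed_chain_complex_def)
  then show ?thesis
    using Dotted by (simp add: left_module_on_def)
qed

lemma qm_weight_zero:
  assumes cc: "decomposed_chain_complex smul I X d" and pm: "partial_matching smul I X d M"
    and e: "QM_arrow I X d M e"
  shows "qm_weight X d e 0 = 0"
proof (cases e)
  case (Thick n i j)
  then have "i \<in> I n" and "j \<in> I (n - 1)"
    using e by (auto simp: QM_arrow_def Q_arrow_def)
  then have "left_module_on smul (X n i)" and "linear_on smul (X n i) (X (n - 1) j) (d n j i)"
    using cc by (auto simp: decomposed_chain_complex_def)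
  then show ?thesis
    using Thick linear_on_zero by simp
next
  case (Dotted n i j)
  then have "(n, i, j) \<in> M"
    using e by (auto simp: QM_arrow_def)
  then have "i \<in> I n" and iso: "module_iso_on smul (X n i) (X (n - 1) j) (d n j i)"
    using pm by (auto simp: partial_matching_def Q_arrow_def)
  then have "left_module_on smul (X n i)"
    using cc by (auto simp: decomposed_chain_complex_def)
  then have "d n j i 0 = 0" and "0 \<in> X n i"
    using linear_on_zero iso by (auto simp: module_iso_on_def left_module_on_def)
  then have "the_inv_into (X n i) (d n j i) 0 = 0"
    using iso by (simp add: module_iso_on_def bij_betw_def the_inv_into_f_eq)
  then show ?thesis
    using Dotted by simp
qed

lemma path_weight_zero:
  assumes "decomposed_chain_complex smul I X d" and "partial_matching smul I X d M"
    and "\<forall>e\<in>set es. QM_arrow I X d M e"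
  shows "path_weight X d es 0 = 0"
  using assms(3) by (induction es) (simp_all add: qm_weight_zero[OF assms(1,2)])

definition zigzag_step :: "(int \<Rightarrow> 'i set) \<Rightarrow> (int \<Rightarrow> 'i \<Rightarrow> 'm::ab_group_add set)
    \<Rightarrow> (int \<Rightarrow> 'i \<Rightarrow> 'i \<Rightarrow> 'm \<Rightarrow> 'm) \<Rightarrow> (int \<times> 'i \<times> 'i) set
    \<Rightarrow> (('i qm_arrow \<times> 'm) \<times> ('i qm_arrow \<times> 'm)) set" where
  "zigzag_step I X d M = {((e', y'), (e, y)).
     QM_arrow I X d M e \<and> y \<in> case_prod X (qm_tgt e) \<and>
     QM_arrow I X d M e' \<and> qm_tgt e = qm_src e' \<and> is_dotted e \<noteq> is_dotted e' \<and>
     y' = qm_weight X d e' y \<and> y' \<noteq> 0}"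

lemma wf_zigzag_step:
  assumes "\<not> (\<exists>f. infinite_zigzag_path I X d M f)"
  shows "wf (zigzag_step I X d M)"
proof (rule ccontr)
  assume "\<not> wf (zigzag_step I X d M)"
  then obtain f where f: "\<And>k. (f (Suc k), f k) \<in> zigzag_step I X d M"
    unfolding wf_iff_no_infinite_down_chain by blast
  have "infinite_zigzag_path I X d M (\<lambda>k. fst (f k))"
    unfolding infinite_zigzag_path_def
  proof
    fix k
    show "QM_arrow I X d M (fst (f k)) \<and> qm_tgt (fst (f k)) = qm_src (fst (f (Suc k))) \<and>
        is_dotted (fst (f k)) \<noteq> is_dotted (fst (f (Suc k)))"
      using f[of k] unfolding zigzag_step_def by auto
  qed
  then show False
    using assms by blast
qed

lemma finite_zigzag_step_successors:
  assumes cc: "decomposed_chain_complex smul I X d" and pm: "partial_matching smul I X d M"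
  shows "finite {s'. (s', (e, y)) \<in> zigzag_step I X d M}"
proof (cases "QM_arrow I X d M e \<and> y \<in> case_prod X (qm_tgt e)")
  case True
  obtain m k where tgt: "qm_tgt e = (m, k)"
    by fastforce
  have "k \<in> I m"
    using True tgt pm by (cases e) (auto simp: QM_arrow_def Q_arrow_def partial_matching_def)
  then have thick_finite: "finite {j \<in> I (m - 1). d m j k y \<noteq> 0}"
    using cc True tgt unfolding decomposed_chain_complex_def by auto
  have dotted_finite: "finite {k'. (m + 1, k', k) \<in> M}"
  proof (cases "\<exists>k0. (m + 1, k0, k) \<in> M")
    case True
    then obtain k0 where "(m + 1, k0, k) \<in> M" ..
    then have "{k'. (m + 1, k', k) \<in> M} \<subseteq> {k0}"
      using matched_arrow_unique[OF pm] by blast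
    then show ?thesis
      using finite_subset by blast
  qed simp
  have "{s'. (s', (e, y)) \<in> zigzag_step I X d M}
      \<subseteq> (\<lambda>j. (Thick m k j, d m j k y)) ` {j \<in> I (m - 1). d m j k y \<noteq> 0}
        \<union> (\<lambda>k'. (Dotted (m + 1) k' k, qm_weight X d (Dotted (m + 1) k' k) y)) ` {k'. (m + 1, k', k) \<in> M}"
  proof
    fix s'
    assume step: "s' \<in> {s'. (s', (e, y)) \<in> zigzag_step I X d M}"
    obtain e' y' where s': "s' = (e', y')"
      by fastforce
    show "s' \<in> (\<lambda>j. (Thick m k j, d m j k y)) ` {j \<in> I (m - 1). d m j k y \<noteq> 0}
        \<union> (\<lambda>k'. (Dotted (m + 1) k' k, qm_weight X d (Dotted (m + 1) k' k) y)) ` {k'. (m + 1, k', k) \<in> M}"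
      using step tgt unfolding s' zigzag_step_def
      by (cases e') (auto simp: QM_arrow_def Q_arrow_def)
  qed
  then show ?thesis
    using thick_finite dotted_finite finite_subset by blast
next
  case False
  then have "{s'. (s', (e, y)) \<in> zigzag_step I X d M} = {}"
    by (auto simp: zigzag_step_def)
  then show ?thesis
    by (metis finite.emptyI)
qed

lemma zigzag_path_descending_chain:
  assumes cc: "decomposed_chain_complex smul I X d" and pm: "partial_matching smul I X d M"
    and "zigzag_path I X d M (e # es)" and "y \<in> case_prod X (qm_tgt e)"
    and "path_weight X d es y \<noteq> 0"
  shows "\<exists>ss. descending_chain (zigzag_step I X d M) (e, y) ss \<and> map fst ss = es"
  using assms(3-)
proof (induction es arbitrary: e y)
  case Nil
  then show ?case
    by simp
next
  case (Cons e' es)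
  define y' where "y' = qm_weight X d e' y"
  have path: "QM_arrow I X d M e" "qm_tgt e = qm_src e'" "is_dotted e \<noteq> is_dotted e'"
    "zigzag_path I X d M (e' # es)"
    using Cons.prems(1) zigzag_path_Cons_Cons by blast+
  then have arrow': "QM_arrow I X d M e'"
    by (simp add: zigzag_path_def)
  have weight: "path_weight X d es y' \<noteq> 0"
    using Cons.prems(3) by (simp add: y'_def)
  then have "y' \<noteq> 0"
    using path_weight_zero[OF cc pm] path(4) by (fastforce simp: zigzag_path_def)
  then have step: "((e', y'), (e, y)) \<in> zigzag_step I X d M"
    using path arrow' Cons.prems(2) by (simp add: zigzag_step_def y'_def)
  have "y' \<in> case_prod X (qm_tgt e')"
    using qm_weight_in_target[OF cc pm arrow'] Cons.prems(2) path(2) by (simp add: y'_def)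
  from Cons.IH[OF path(4) this weight]
  obtain ss where "descending_chain (zigzag_step I X d M) (e', y') ss" and "map fst ss = es"
    by blast
  then show ?case
    using step by (intro exI[of _ "(e', y') # ss"]) simp
qed

lemma finite_nonzero_zigzag_extensions:
  assumes cc: "decomposed_chain_complex smul I X d" and pm: "partial_matching smul I X d M"
    and no_infinite: "\<not> (\<exists>f. infinite_zigzag_path I X d M f)"
    and y: "y \<in> case_prod X (qm_tgt e)"
  shows "finite {es. zigzag_path I X d M (e # es) \<and> path_weight X d es y \<noteq> 0}"
proof (rule finite_subset)
  show "{es. zigzag_path I X d M (e # es) \<and> path_weight X d es y \<noteq> 0}
      \<subseteq> map fst ` {ss. descending_chain (zigzag_step I X d M) (e, y) ss}"
    using zigzag_path_descending_chain[OF cc pm _ y] by blast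
  show "finite (map fst ` {ss. descending_chain (zigzag_step I X d M) (e, y) ss})"
    using finite_descending_chains[OF wf_zigzag_step[OF no_infinite]]
      finite_zigzag_step_successors[OF cc pm] by auto
qed

lemma finite_nonzero_Path1:
  assumes cc: "decomposed_chain_complex smul I X d" and pm: "partial_matching smul I X d M"
    and no_infinite: "\<not> (\<exists>f. infinite_zigzag_path I X d M f)"
    and i: "i \<in> D_set M n" and x: "x \<in> X n i"
  shows "finite {p. \<exists>v. p \<in> Path1 I X d M (n, i) v \<and> path_weight X d p x \<noteq> 0}"
proof -
  obtain k where k: "(n + 1, k, i) \<in> M"
    using i unfolding D_set_def by blast
  define e0 where "e0 = Dotted (n + 1) k i"
  have e0: "QM_arrow I X d M e0"
    using k by (simp add: e0_def QM_arrow_def)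
  have y0: "qm_weight X d e0 x \<in> case_prod X (qm_tgt e0)"
    using qm_weight_in_target[OF cc pm e0] x by (simp add: e0_def)
  have "{p. \<exists>v. p \<in> Path1 I X d M (n, i) v \<and> path_weight X d p x \<noteq> 0}
      \<subseteq> Cons e0 ` {es. zigzag_path I X d M (e0 # es) \<and> path_weight X d es (qm_weight X d e0 x) \<noteq> 0}"
  proof
    fix p
    assume "p \<in> {p. \<exists>v. p \<in> Path1 I X d M (n, i) v \<and> path_weight X d p x \<noteq> 0}"
    then obtain e es where p: "p = e # es" and path: "zigzag_path I X d M (e # es)"
      and e: "is_dotted e" "qm_src e = (n, i)" and weight: "path_weight X d p x \<noteq> 0"
      unfolding Path1_def by (cases p) auto
    have "QM_arrow I X d M e"
      using path by (simp add: zigzag_path_def)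
    then have "e = e0"
      using e matched_arrow_unique[OF pm k] unfolding e0_def by (cases e) (auto simp: QM_arrow_def)
    then show "p \<in> Cons e0 ` {es. zigzag_path I X d M (e0 # es) \<and> path_weight X d es (qm_weight X d e0 x) \<noteq> 0}"
      using p path weight by simp
  qed
  then show ?thesis
    using finite_nonzero_zigzag_extensions[OF cc pm no_infinite y0] finite_subset by blast
qed

lemma path_sum_nonzero_imp_path:
  assumes "path_sum I X d M u v x \<noteq> 0"
  shows "\<exists>p\<in>Path1 I X d M u v. path_weight X d p x \<noteq> 0"
proof (rule ccontr)
  assume "\<not> (\<exists>p\<in>Path1 I X d M u v. path_weight X d p x \<noteq> 0)"
  then have "{p \<in> Path1 I X d M u v. path_weight X d p x \<noteq> 0} = {}"
    by blast
  then show False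
    using assms by (simp add: path_sum_def)
qed

theorem proposition3p2:
  fixes smul :: "'r::ring_1 \<Rightarrow> 'm::ab_group_add \<Rightarrow> 'm"
    and I :: "int \<Rightarrow> 'i set"
    and X :: "int \<Rightarrow> 'i \<Rightarrow> 'm set"
    and d :: "int \<Rightarrow> 'i \<Rightarrow> 'i \<Rightarrow> 'm \<Rightarrow> 'm"
    and M :: "(int \<times> 'i \<times> 'i) set"
  assumes "decomposed_chain_complex smul I X d"
    and "partial_matching smul I X d M"
    and "\<not> (\<exists>f. infinite_zigzag_path I X d M f)"
  shows "morse_matching smul I X d M"
  unfolding morse_matching_def
proof (intro conjI assms(2) allI ballI)
  fix n i x
  assume "i \<in> D_set M n" and "x \<in> X n i"
  let ?P = "{p. \<exists>v. p \<in> Path1 I X d M (n, i) v \<and> path_weight X d p x \<noteq> 0}"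
  have finite_P: "finite ?P"
    using finite_nonzero_Path1[OF assms \<open>i \<in> D_set M n\<close> \<open>x \<in> X n i\<close>] .
  show "finite {p \<in> Path1 I X d M (n, i) (n, j). path_weight X d p x \<noteq> 0}" for j
    using finite_P by (rule finite_subset[rotated]) blast
  have "{j \<in> I n. path_sum I X d M (n, i) (n, j) x \<noteq> 0} \<subseteq> (\<lambda>p. snd (qm_tgt (last p))) ` ?P"
  proof
    fix j
    assume "j \<in> {j \<in> I n. path_sum I X d M (n, i) (n, j) x \<noteq> 0}"
    then obtain p where "p \<in> Path1 I X d M (n, i) (n, j)" and "path_weight X d p x \<noteq> 0"
      using path_sum_nonzero_imp_path by blast
    moreover from this have "qm_tgt (last p) = (n, j)"
      by (simp add: Path1_def)
    ultimately show "j \<in> (\<lambda>p. snd (qm_tgt (last p))) ` ?P"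
      by force
  qed
  then show "finite {j \<in> I n. path_sum I X d M (n, i) (n, j) x \<noteq> 0}"
    using finite_P finite_subset by blast
qed

end
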